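(* Let $M$ be a duplicial module in a pre-additive category. Then $b_n\pi_n=\pi_{n-1}b_n$ for all $n\ge1$ and $d_n\pi_n=\pi_{n+1}d_n$ for all $n\ge0$.
   Context: Let $\mathcal A$ be a pre-additive category. Let $\Lambda_+$ be the category with objects $[n]$, $n\ge0$, where $\Lambda_+([m],[n])$ is the set of weakly monotone $f:\mathbb Z\to\mathbb Z$ with $f(j+m+1)=f(j)+n+1$ for all $j$ and $f(0)\ge0$. Define $\varepsilon^n_i:[n-1]\to[n]$ ($n\ge1$, $0\le i\le n$) by $\varepsilon^n_i(j)=j$ for $0\le j<i$, $j+1$ for $i\le j\le n-1$, and $\eta^n_i:[n+1]\to[n]$ ($0\le i\le n+1$) by $\eta^n_i(j)=j$ for $0\le j\le i$, $j-1$ for $i<j\le n+1$. A duplicial module is a functor $M:\Lambda_+^{op}\to\mathcal A$; $M_n=M([n])$, $\partial_{n,i}=M(\varepsilon^n_i):M_n\to M_{n-1}$, $s_{n,i}=M(\eta^n_i):M_n\to M_{n+1}$. Convention $M_{-1}=0$, maps into/out of it zero. Define $b_n=\sum_{i=0}^n(-1)^i\partial_{n,i}$ ($b_0=0$), $d_n=\sum_{i=0}^{n+1}(-1)^is_{n,i}$, the Karoubi operator $\kappa_n=(-1)^n(\partial_{n+1,0}s_{n,n+1}-s_{n-1,n}\partial_{n,0})$ (so $\kappa_0=\partial_{1,0}s_{0,1}$), and the Dwyer–Kan operator $\pi_n=(-1)^n\partial_{n+1,0}\kappa_{n+1}^n s_{n,n+1}$. *)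

theory Defs
  imports Main
begin

text \<open>A category with object set Ob, hom-sets Hom a b, composition
 cmp a b c g f (for f : a -> b, g : b -> c, i.e. g o f), identities idm,
 and on every hom-set an abelian group structure (pls, zer, ng) such that
 composition is bilinear.\<close>

record ('o, 'm) preadd_cat =
  Ob  :: "'o set"
  Hom :: "'o \<Rightarrow> 'o \<Rightarrow> 'm set"
  cmp :: "'o \<Rightarrow> 'o \<Rightarrow> 'o \<Rightarrow> 'm \<Rightarrow> 'm \<Rightarrow> 'm"
  idm :: "'o \<Rightarrow> 'm"
  pls :: "'o \<Rightarrow> 'o \<Rightarrow> 'm \<Rightarrow> 'm \<Rightarrow> 'm"
  zer :: "'o \<Rightarrow> 'o \<Rightarrow> 'm"
  ng  :: "'o \<Rightarrow> 'o \<Rightarrow> 'm \<Rightarrow> 'm"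

definition preadditive :: "('o, 'm) preadd_cat \<Rightarrow> bool" where
  "preadditive C \<longleftrightarrow>
     (\<forall>a\<in>Ob C. idm C a \<in> Hom C a a) \<and>
     (\<forall>a\<in>Ob C. \<forall>b\<in>Ob C. \<forall>c\<in>Ob C. \<forall>f\<in>Hom C a b. \<forall>g\<in>Hom C b c.
        cmp C a b c g f \<in> Hom C a c) \<and>
     (\<forall>a\<in>Ob C. \<forall>b\<in>Ob C. \<forall>c\<in>Ob C. \<forall>d\<in>Ob C.
        \<forall>f\<in>Hom C a b. \<forall>g\<in>Hom C b c. \<forall>h\<in>Hom C c d.
        cmp C a c d h (cmp C a b c g f) = cmp C a b d (cmp C b c d h g) f) \<and>
     (\<forall>a\<in>Ob C. \<forall>b\<in>Ob C. \<forall>f\<in>Hom C a b.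
        cmp C a b b (idm C b) f = f \<and> cmp C a a b f (idm C a) = f) \<and>
     (\<forall>a\<in>Ob C. \<forall>b\<in>Ob C.
        zer C a b \<in> Hom C a b \<and>
        (\<forall>f\<in>Hom C a b. \<forall>g\<in>Hom C a b. pls C a b f g \<in> Hom C a b) \<and>
        (\<forall>f\<in>Hom C a b. ng C a b f \<in> Hom C a b) \<and>
        (\<forall>f\<in>Hom C a b. \<forall>g\<in>Hom C a b. \<forall>h\<in>Hom C a b.
           pls C a b (pls C a b f g) h = pls C a b f (pls C a b g h)) \<and>
        (\<forall>f\<in>Hom C a b. \<forall>g\<in>Hom C a b. pls C a b f g = pls C a b g f) \<and>
        (\<forall>f\<in>Hom C a b. pls C a b (zer C a b) f = f) \<and>
        (\<forall>f\<in>Hom C a b. pls C a b (ng C a b f) f = zer C a b)) \<and>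
     (\<forall>a\<in>Ob C. \<forall>b\<in>Ob C. \<forall>c\<in>Ob C.
        \<forall>f\<in>Hom C a b. \<forall>f'\<in>Hom C a b. \<forall>g\<in>Hom C b c. \<forall>g'\<in>Hom C b c.
        cmp C a b c (pls C b c g g') f = pls C a c (cmp C a b c g f) (cmp C a b c g' f) \<and>
        cmp C a b c g (pls C a b f f') = pls C a c (cmp C a b c g f) (cmp C a b c g f'))"

text \<open>Morphisms [m] -> [n]: weakly monotone f : Z -> Z with
  f(j+m+1) = f(j)+n+1 and f(0) >= 0; composition is composition of functions.\<close>

definition lam_hom :: "nat \<Rightarrow> nat \<Rightarrow> (int \<Rightarrow> int) set" where
  "lam_hom m n = {f. mono f \<and> (\<forall>j. f (j + int m + 1) = f j + int n + 1) \<and> f 0 \<ge> 0}"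

text \<open>epsilon^n_i : [n-1] -> [n] (n >= 1), extended periodically to Z.\<close>
definition eps :: "nat \<Rightarrow> nat \<Rightarrow> int \<Rightarrow> int" where
  "eps n i j = (j div int n) * (int n + 1) +
     (if j mod int n < int i then j mod int n else j mod int n + 1)"

text \<open>eta^n_i : [n+1] -> [n], extended periodically to Z.\<close>
definition eta :: "nat \<Rightarrow> nat \<Rightarrow> int \<Rightarrow> int" where
  "eta n i j = (j div (int n + 2)) * (int n + 1) +
     (if j mod (int n + 2) \<le> int i then j mod (int n + 2) else j mod (int n + 2) - 1)"

text \<open>A functor M : Lambda_+^op -> C, given by objects Mo n = M_n and
  Mm m n f = M(f) : M_n -> M_m for f : [m] -> [n].\<close>

definition duplicial :: "('o, 'm) preadd_cat \<Rightarrow> (nat \<Rightarrow> 'o) \<Rightarrow>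
    (nat \<Rightarrow> nat \<Rightarrow> (int \<Rightarrow> int) \<Rightarrow> 'm) \<Rightarrow> bool" where
  "duplicial C Mo Mm \<longleftrightarrow>
     (\<forall>n. Mo n \<in> Ob C) \<and>
     (\<forall>m n f. f \<in> lam_hom m n \<longrightarrow> Mm m n f \<in> Hom C (Mo n) (Mo m)) \<and>
     (\<forall>n. Mm n n id = idm C (Mo n)) \<and>
     (\<forall>l m n f g. f \<in> lam_hom l m \<longrightarrow> g \<in> lam_hom m n \<longrightarrow>
        Mm l n (g \<circ> f) = cmp C (Mo n) (Mo m) (Mo l) (Mm l m f) (Mm m n g))"

definition face :: "(nat \<Rightarrow> nat \<Rightarrow> (int \<Rightarrow> int) \<Rightarrow> 'm) \<Rightarrow> nat \<Rightarrow> nat \<Rightarrow> 'm" where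
  "face Mm n i = Mm (n - 1) n (eps n i)"

definition degen :: "(nat \<Rightarrow> nat \<Rightarrow> (int \<Rightarrow> int) \<Rightarrow> 'm) \<Rightarrow> nat \<Rightarrow> nat \<Rightarrow> 'm" where
  "degen Mm n i = Mm (n + 1) n (eta n i)"

definition sgnm :: "('o, 'm) preadd_cat \<Rightarrow> 'o \<Rightarrow> 'o \<Rightarrow> nat \<Rightarrow> 'm \<Rightarrow> 'm" where
  "sgnm C a b k f = (if even k then f else ng C a b f)"

definition altsum :: "('o, 'm) preadd_cat \<Rightarrow> 'o \<Rightarrow> 'o \<Rightarrow> nat \<Rightarrow> (nat \<Rightarrow> 'm) \<Rightarrow> 'm" where
  "altsum C a b n F = foldr (\<lambda>i acc. pls C a b (sgnm C a b i (F i)) acc) [0..<Suc n] (zer C a b)"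

definition bop :: "('o, 'm) preadd_cat \<Rightarrow> (nat \<Rightarrow> 'o) \<Rightarrow>
    (nat \<Rightarrow> nat \<Rightarrow> (int \<Rightarrow> int) \<Rightarrow> 'm) \<Rightarrow> nat \<Rightarrow> 'm" where
  "bop C Mo Mm n = altsum C (Mo n) (Mo (n - 1)) n (face Mm n)"

definition dop :: "('o, 'm) preadd_cat \<Rightarrow> (nat \<Rightarrow> 'o) \<Rightarrow>
    (nat \<Rightarrow> nat \<Rightarrow> (int \<Rightarrow> int) \<Rightarrow> 'm) \<Rightarrow> nat \<Rightarrow> 'm" where
  "dop C Mo Mm n = altsum C (Mo n) (Mo (n + 1)) (n + 1) (degen Mm n)"

definition karoubi :: "('o, 'm) preadd_cat \<Rightarrow> (nat \<Rightarrow> 'o) \<Rightarrow>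
    (nat \<Rightarrow> nat \<Rightarrow> (int \<Rightarrow> int) \<Rightarrow> 'm) \<Rightarrow> nat \<Rightarrow> 'm" where
  "karoubi C Mo Mm n =
     (if n = 0 then cmp C (Mo 0) (Mo 1) (Mo 0) (face Mm 1 0) (degen Mm 0 1)
      else sgnm C (Mo n) (Mo n) n
        (pls C (Mo n) (Mo n)
          (cmp C (Mo n) (Mo (n + 1)) (Mo n) (face Mm (n + 1) 0) (degen Mm n (n + 1)))
          (ng C (Mo n) (Mo n)
            (cmp C (Mo n) (Mo (n - 1)) (Mo n) (degen Mm (n - 1) n) (face Mm n 0)))))"

fun karoubi_pow :: "('o, 'm) preadd_cat \<Rightarrow> (nat \<Rightarrow> 'o) \<Rightarrow>
    (nat \<Rightarrow> nat \<Rightarrow> (int \<Rightarrow> int) \<Rightarrow> 'm) \<Rightarrow> nat \<Rightarrow> nat \<Rightarrow> 'm" where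
  "karoubi_pow C Mo Mm n 0 = idm C (Mo n)"
| "karoubi_pow C Mo Mm n (Suc k) =
     cmp C (Mo n) (Mo n) (Mo n) (karoubi C Mo Mm n) (karoubi_pow C Mo Mm n k)"

definition dk :: "('o, 'm) preadd_cat \<Rightarrow> (nat \<Rightarrow> 'o) \<Rightarrow>
    (nat \<Rightarrow> nat \<Rightarrow> (int \<Rightarrow> int) \<Rightarrow> 'm) \<Rightarrow> nat \<Rightarrow> 'm" where
  "dk C Mo Mm n = sgnm C (Mo n) (Mo n) n
     (cmp C (Mo n) (Mo (n + 1)) (Mo n) (face Mm (n + 1) 0)
        (cmp C (Mo n) (Mo (n + 1)) (Mo (n + 1)) (karoubi_pow C Mo Mm (n + 1) n)
           (degen Mm n (n + 1))))"

end

theory Submission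
  imports Defs "HOL-Algebra.Free_Abelian_Groups"
begin

text \<open>The maps \<open>M(f)\<close> extend additively to those elements of the monoid ring of maps
  \<open>\<int> \<rightarrow> \<int>\<close> that are supported in \<open>\<Lambda>\<^sub>+([m], [n])\<close>, compatibly with products, so both
  identities are consequences of identities in this ring. There, the
  normalization idempotent \<open>N\<^sub>n = (1 - s\<^sub>0\<partial>\<^sub>1)\<cdots>(1 - s\<^sub>n\<^sub>-\<^sub>1\<partial>\<^sub>n)\<close> commutes with \<open>b\<close> and \<open>d\<close>,
  because the faces \<open>\<partial>\<^sub>i\<close>, \<open>i \<ge> 1\<close>, kill \<open>N\<^sub>n\<close>, while \<open>N\<^sub>n\<close> kills the degeneracies that
  make up \<open>1 - N\<^sub>n\<close>; and the period shift \<open>T\<^sub>n = t\<^sup>n\<^sup>+\<^sup>1\<close> commutes with every morphism of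
  \<open>\<Lambda>\<^sub>+\<close>. Finally \<open>\<pi>\<^sub>n = N\<^sub>n T\<^sub>n\<close>: the faces \<open>\<partial>\<^sub>i\<close>, \<open>i \<ge> 1\<close>, kill \<open>\<pi>\<^sub>n\<close>, and expanding \<open>\<kappa>\<^sup>n\<close> one
  factor at a time shows that \<open>\<pi>\<^sub>n\<close> agrees with \<open>t\<^sup>n\<^sup>+\<^sup>1\<close> up to degenerate terms. Hence
  \<open>b \<pi> = b N T = N b T = N T b = \<pi> b\<close>, and likewise for \<open>d\<close>.\<close>

section \<open>The category \<open>\<Lambda>\<^sub>+\<close>\<close>

lemma periodic_multiple:
  assumes "\<And>j. f (j + int m + 1) = f j + int n + 1"
  shows "f (x + q * (int m + 1)) = f x + q * (int n + 1)"
proof (induction q rule: int_induct[where k = 0])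
  case (step1 q)
  have "f (x + (q + 1) * (int m + 1)) = f (x + q * (int m + 1) + int m + 1)"
    by (simp add: algebra_simps)
  also have "\<dots> = f (x + q * (int m + 1)) + int n + 1" by (rule assms)
  finally show ?case using step1 by (simp add: algebra_simps)
next
  case (step2 q)
  have "f (x + q * (int m + 1)) = f (x + (q - 1) * (int m + 1) + int m + 1)"
    by (simp add: algebra_simps)
  also have "\<dots> = f (x + (q - 1) * (int m + 1)) + int n + 1" by (rule assms)
  finally show ?case using step2 by (simp add: algebra_simps)
qed simp

lemma lam_hom_periodic:
  "f \<in> lam_hom m n \<Longrightarrow> f (x + q * (int m + 1)) = f x + q * (int n + 1)"
  by (rule periodic_multiple) (simp add: lam_hom_def)

lemma reduce_mod_period:
  obtains r q where "x = r + q * (int m + 1)" "0 \<le> r" "r \<le> int m"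
proof
  show "x = x mod (int m + 1) + x div (int m + 1) * (int m + 1)" by (simp only: mod_div_mult_eq)
qed (use pos_mod_bound[of "int m + 1" x] in auto)

lemma lam_hom_eqI:
  assumes "f \<in> lam_hom m n" "g \<in> lam_hom m n"
    and "\<And>x. 0 \<le> x \<Longrightarrow> x \<le> int m \<Longrightarrow> f x = g x"
  shows "f = g"
proof
  fix x
  obtain r q where "x = r + q * (int m + 1)" "0 \<le> r" "r \<le> int m"
    by (rule reduce_mod_period)
  then show "f x = g x" using assms lam_hom_periodic by metis
qed

lemma lam_homI:
  assumes periodic: "\<And>x. f (x + int m + 1) = f x + int n + 1"
    and step: "\<And>x. 0 \<le> x \<Longrightarrow> x \<le> int m \<Longrightarrow> f x \<le> f (x + 1)"
    and "f 0 \<ge> 0"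
  shows "f \<in> lam_hom m n"
proof -
  have step_all: "f x \<le> f (x + 1)" for x
  proof -
    obtain r q where x: "x = r + q * (int m + 1)" "0 \<le> r" "r \<le> int m"
      by (rule reduce_mod_period)
    have "x + 1 = (r + 1) + q * (int m + 1)" using x by simp
    then show ?thesis
      using x step periodic_multiple[of f m n, OF periodic] by (metis add_le_cancel_right)
  qed
  have "mono f"
  proof (rule monoI)
    fix x y :: int
    assume "x \<le> y"
    then show "f x \<le> f y"
      by (induction y rule: int_ge_induct) (auto intro: order_trans step_all)
  qed
  then show ?thesis unfolding lam_hom_def using assms by simp
qed

lemma lam_hom_comp: "f \<in> lam_hom l m \<Longrightarrow> g \<in> lam_hom m n \<Longrightarrow> g \<circ> f \<in> lam_hom l n"
  unfolding lam_hom_def mono_def by (auto simp: add.assoc intro: order_trans)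

lemma id_lam_hom: "id \<in> lam_hom n n"
  unfolding lam_hom_def by (simp add: mono_def)

lemma shift_lam_hom: "k \<ge> 0 \<Longrightarrow> (\<lambda>x. x + k) \<in> lam_hom n n"
  unfolding lam_hom_def by (simp add: mono_def)

lemma lam_hom_commutes_with_period_shift:
  "f \<in> lam_hom m n \<Longrightarrow> (\<lambda>x. x + (int n + 1)) \<circ> f = f \<circ> (\<lambda>x. x + (int m + 1))"
  unfolding lam_hom_def by (auto simp: add.assoc)

lemma eps_shift:
  assumes "1 \<le> n"
  shows "eps n i (x + int n) = eps n i x + int n + 1"
proof -
  have "(x + int n) div int n = x div int n + 1"
    using assms div_add_self2[of "int n" x] by simp
  then show ?thesis by (simp add: eps_def algebra_simps)
qed

text \<open>Evaluated on \<open>[0, m]\<close>, a composite of two structure maps only sees its inner factor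
  on two periods.\<close>

lemma eps_on_two_periods:
  assumes "1 \<le> n" "0 \<le> x" "x < 2 * int n"
  shows "eps n i x =
    (if x < int n then (if x < int i then x else x + 1)
     else (if x - int n < int i then x + 1 else x + 2))"
proof -
  have first: "eps n i y = (if y < int i then y else y + 1)" if "0 \<le> y" "y < int n" for y
    using that by (simp add: eps_def)
  show ?thesis
    using first[of x] first[of "x - int n"] eps_shift[OF assms(1), of i "x - int n"] assms by auto
qed

lemma eps_lam_hom: "m + 1 = n \<Longrightarrow> eps n i \<in> lam_hom m n"
proof (rule lam_homI)
  show "eps n i (x + int m + 1) = eps n i x + int n + 1" if "m + 1 = n" for x
  proof -
    have "x + int m + 1 = x + int n" "1 \<le> n" using that by auto
    then show ?thesis using eps_shift[of n i x] by (simp only:)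
  qed
qed (auto simp: eps_on_two_periods)

lemma eta_shift: "eta n i (x + int n + 2) = eta n i x + int n + 1"
proof -
  have "(x + (int n + 2)) div (int n + 2) = x div (int n + 2) + 1"
    using div_add_self2[of "int n + 2" x] by simp
  then have "eta n i (x + (int n + 2)) = eta n i x + int n + 1"
    by (simp add: eta_def algebra_simps)
  then show ?thesis by (simp add: add.assoc)
qed

lemma eta_on_two_periods:
  assumes "0 \<le> x" "x < 2 * int n + 4"
  shows "eta n i x =
    (if x < int n + 2 then (if x \<le> int i then x else x - 1)
     else (if x - int n - 2 \<le> int i then x - 1 else x - 2))"
proof -
  have first: "eta n i y = (if y \<le> int i then y else y - 1)" if "0 \<le> y" "y < int n + 2" for y
    using that by (simp add: eta_def)
  show ?thesis
    using first[of x] first[of "x - int n - 2"] eta_shift[of n i "x - int n - 2"] assms by auto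
qed

lemma eta_lam_hom: "m = n + 1 \<Longrightarrow> eta n i \<in> lam_hom m n"
proof (rule lam_homI)
  show "eta n i (x + int m + 1) = eta n i x + int n + 1" if "m = n + 1" for x
    using that eta_shift[of n i x] by (simp add: add.assoc add.commute)
qed (auto simp: eta_on_two_periods)

section \<open>The monoid ring of \<open>\<Lambda>\<^sub>+\<close>\<close>

datatype endo = Endo (app: "int \<Rightarrow> int")

text \<open>The monoid operation is composition in diagrammatic order, so that the contravariant
  \<open>M\<close> turns products into composites: \<open>M (g \<circ> f) = M f \<circ> M g\<close>.\<close>

instantiation endo :: monoid_add
begin
definition zero_endo_def: "0 = Endo id"
definition plus_endo_def: "a + b = Endo (app b \<circ> app a)"
instance by standard (auto simp: zero_endo_def plus_endo_def comp_assoc)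
end

type_synonym lam_ring = "endo \<Rightarrow>\<^sub>0 int"

definition basis :: "(int \<Rightarrow> int) \<Rightarrow> lam_ring" where
  "basis f = frag_of (Endo f)"

lemma basis_mult: "basis f * basis g = basis (g \<circ> f)"
  by (simp add: basis_def mult_single plus_endo_def)

lemma basis_id: "basis id = 1"
  by (simp add: basis_def zero_endo_def[symmetric])

definition face_elt :: "nat \<Rightarrow> nat \<Rightarrow> lam_ring" where
  "face_elt n i = basis (eps n i)"

definition degen_elt :: "nat \<Rightarrow> nat \<Rightarrow> lam_ring" where
  "degen_elt n i = basis (eta n i)"

definition cyc_elt :: lam_ring where
  "cyc_elt = basis (\<lambda>x. x + 1)"

definition period_elt :: "nat \<Rightarrow> lam_ring" where
  "period_elt n = basis (\<lambda>x. x + (int n + 1))"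

lemma cyc_elt_power: "cyc_elt ^ (n + 1) = period_elt n"
proof (induction n)
  case (Suc n)
  have "cyc_elt ^ (Suc n + 1) = cyc_elt * cyc_elt ^ (n + 1)" by (metis power_Suc Suc_eq_plus1)
  also have "\<dots> = cyc_elt * period_elt n" by (simp only: Suc)
  finally show ?case by (simp add: cyc_elt_def period_elt_def basis_mult comp_def algebra_simps)
qed (simp add: cyc_elt_def period_elt_def)

lemmas lam_hom_intros = lam_hom_comp eps_lam_hom eta_lam_hom shift_lam_hom id_lam_hom
lemmas lam_hom_values = eps_on_two_periods eta_on_two_periods

lemma face_face:
  assumes "2 \<le> n" "i < j" "j \<le> n"
  shows "face_elt (n - 1) i * face_elt n j = face_elt (n - 1) (j - 1) * face_elt n i"
proof -
  have "eps n j \<circ> eps (n - 1) i = eps n i \<circ> eps (n - 1) (j - 1)"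
    by (rule lam_hom_eqI[where m = "n - 2"])
      (use assms in \<open>auto intro!: lam_hom_intros simp: lam_hom_values\<close>)
  then show ?thesis by (simp add: face_elt_def basis_mult)
qed

lemma face_degen_eq_one:
  assumes "1 \<le> n" "k = i \<or> k + 1 = i" "i \<le> n"
  shows "face_elt n i * degen_elt (n - 1) k = 1"
proof -
  have "eta (n - 1) k \<circ> eps n i = id"
    by (rule lam_hom_eqI[where m = "n - 1"])
      (use assms in \<open>auto intro!: lam_hom_intros simp: lam_hom_values\<close>)
  then show ?thesis by (simp add: face_elt_def degen_elt_def basis_mult basis_id)
qed

lemma face_degen_below:
  assumes "2 \<le> n" "i < k" "k \<le> n" "1 \<le> i \<or> k < n"
  shows "face_elt n i * degen_elt (n - 1) k = degen_elt (n - 2) (k - 1) * face_elt (n - 1) i"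
proof -
  have "eta (n - 1) k \<circ> eps n i = eps (n - 1) i \<circ> eta (n - 2) (k - 1)"
    by (rule lam_hom_eqI[where m = "n - 1"])
      (use assms in \<open>auto intro!: lam_hom_intros simp: lam_hom_values\<close>)
  then show ?thesis by (simp add: face_elt_def degen_elt_def basis_mult)
qed

lemma face_degen_above:
  assumes "2 \<le> n" "k + 1 < i" "i \<le> n"
  shows "face_elt n i * degen_elt (n - 1) k = degen_elt (n - 2) k * face_elt (n - 1) (i - 1)"
proof -
  have "eta (n - 1) k \<circ> eps n i = eps (n - 1) (i - 1) \<circ> eta (n - 2) k"
    by (rule lam_hom_eqI[where m = "n - 1"])
      (use assms in \<open>auto intro!: lam_hom_intros simp: lam_hom_values\<close>)
  then show ?thesis by (simp add: face_elt_def degen_elt_def basis_mult)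
qed

lemma degen_degen:
  assumes "1 \<le> n" "j < k" "k \<le> n + 1"
  shows "degen_elt n k * degen_elt (n - 1) j = degen_elt n j * degen_elt (n - 1) (k - 1)"
proof -
  have "eta (n - 1) j \<circ> eta n k = eta (n - 1) (k - 1) \<circ> eta n j"
    by (rule lam_hom_eqI[where m = "n + 1"])
      (use assms in \<open>auto intro!: lam_hom_intros simp: lam_hom_values\<close>)
  then show ?thesis by (simp add: degen_elt_def basis_mult)
qed

lemma face_zero_degen_last: "face_elt (n + 1) 0 * degen_elt n (n + 1) = cyc_elt"
proof -
  have "eta n (n + 1) \<circ> eps (n + 1) 0 = (\<lambda>x. x + 1)"
    by (rule lam_hom_eqI[where m = n]) (auto intro!: lam_hom_intros simp: lam_hom_values)
  then show ?thesis by (simp add: face_elt_def degen_elt_def cyc_elt_def basis_mult)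
qed

lemma face_cyc:
  assumes "j \<le> n"
  shows "face_elt (n + 1) j * cyc_elt = cyc_elt * face_elt (n + 1) (j + 1)"
proof -
  have "(\<lambda>x. x + 1) \<circ> eps (n + 1) j = eps (n + 1) (j + 1) \<circ> (\<lambda>x. x + 1)"
    by (rule lam_hom_eqI[where m = n])
      (use assms in \<open>auto intro!: lam_hom_intros simp: lam_hom_values\<close>)
  then show ?thesis by (simp add: face_elt_def cyc_elt_def basis_mult)
qed

lemma face_last_cyc: "face_elt (n + 1) (n + 1) * cyc_elt = face_elt (n + 1) 0"
proof -
  have "(\<lambda>x. x + 1) \<circ> eps (n + 1) (n + 1) = eps (n + 1) 0"
    by (rule lam_hom_eqI[where m = n]) (auto intro!: lam_hom_intros simp: lam_hom_values)
  then show ?thesis by (simp add: face_elt_def cyc_elt_def basis_mult)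
qed

lemma cyc_degen:
  assumes "1 \<le> j" "j \<le> n"
  shows "cyc_elt * degen_elt (n - 1) j = degen_elt (n - 1) (j - 1) * cyc_elt"
proof -
  have "eta (n - 1) j \<circ> (\<lambda>x. x + 1) = (\<lambda>x. x + 1) \<circ> eta (n - 1) (j - 1)"
    by (rule lam_hom_eqI[where m = n])
      (use assms in \<open>auto intro!: lam_hom_intros simp: lam_hom_values\<close>)
  then show ?thesis by (simp add: degen_elt_def cyc_elt_def basis_mult)
qed

definition lam_keys :: "nat \<Rightarrow> nat \<Rightarrow> endo set" where
  "lam_keys m n = {k. app k \<in> lam_hom m n}"

lemma keys_basis_lam_keys: "f \<in> lam_hom m n \<Longrightarrow> Poly_Mapping.keys (basis f) \<subseteq> lam_keys m n"
  by (simp add: basis_def lam_keys_def)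

lemma zero_in_lam_keys: "0 \<in> lam_keys n n"
  by (simp add: lam_keys_def zero_endo_def id_lam_hom)

lemma keys_face_elt: "m + 1 = n \<Longrightarrow> Poly_Mapping.keys (face_elt n i) \<subseteq> lam_keys m n"
  unfolding face_elt_def by (intro keys_basis_lam_keys eps_lam_hom)

lemma keys_degen_elt: "m = n + 1 \<Longrightarrow> Poly_Mapping.keys (degen_elt n i) \<subseteq> lam_keys m n"
  unfolding degen_elt_def by (intro keys_basis_lam_keys eta_lam_hom)

lemma keys_mult_lam_keys:
  assumes "Poly_Mapping.keys p \<subseteq> lam_keys m l" "Poly_Mapping.keys q \<subseteq> lam_keys l n"
  shows "Poly_Mapping.keys (p * q) \<subseteq> lam_keys m n"
proof
  fix k assume "k \<in> Poly_Mapping.keys (p * q)"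
  then obtain a b where "k = a + b" "a \<in> Poly_Mapping.keys p" "b \<in> Poly_Mapping.keys q"
    using keys_mult[of p q] by blast
  then show "k \<in> lam_keys m n"
    using assms by (auto simp: lam_keys_def plus_endo_def intro: lam_hom_comp)
qed

lemma keys_power_lam_keys:
  "Poly_Mapping.keys p \<subseteq> lam_keys n n \<Longrightarrow> Poly_Mapping.keys (p ^ k) \<subseteq> lam_keys n n"
  by (induction k) (simp_all add: zero_in_lam_keys keys_mult_lam_keys)

lemma keys_add_subset:
  "Poly_Mapping.keys p \<subseteq> S \<Longrightarrow> Poly_Mapping.keys q \<subseteq> S \<Longrightarrow> Poly_Mapping.keys (p + q) \<subseteq> S"
  using keys_add[of p q] by blast

lemma keys_diff_subset:
  "Poly_Mapping.keys p \<subseteq> S \<Longrightarrow> Poly_Mapping.keys q \<subseteq> S \<Longrightarrow> Poly_Mapping.keys (p - q) \<subseteq> S"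
  using keys_diff[of p q] by blast

lemma keys_neg_one_power_mult: "Poly_Mapping.keys ((-1) ^ k * p) = Poly_Mapping.keys (p :: lam_ring)"
  by (cases "even k") (simp_all add: neg_one_even_power neg_one_odd_power)

lemma keys_sum_subset:
  "(\<And>i. i \<in> I \<Longrightarrow> Poly_Mapping.keys (g i) \<subseteq> S) \<Longrightarrow> Poly_Mapping.keys (sum g I) \<subseteq> S"
  using keys_sum[of g I] by blast

lemma period_elt_commute:
  "Poly_Mapping.keys p \<subseteq> lam_keys m n \<Longrightarrow> p * period_elt n = period_elt m * p"
proof (induction p rule: frag_induction)
  case (one k)
  then show ?case
    using lam_hom_commutes_with_period_shift[of "app k" m n]
    by (simp add: period_elt_def basis_def mult_single plus_endo_def lam_keys_def)
qed (simp_all add: algebra_simps)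

section \<open>The normalization idempotent\<close>

text \<open>\<open>normalizer n\<close> is \<open>N\<^sub>n\<close>, the projection of \<open>M\<^sub>n\<close> onto \<open>\<Inter>\<^sub>i\<^sub>\<ge>\<^sub>1 ker \<partial>\<^sub>i\<close> along the
  degenerate part.\<close>

definition normal_factor :: "nat \<Rightarrow> nat \<Rightarrow> lam_ring" where
  "normal_factor n j = 1 - degen_elt (n - 1) (j - 1) * face_elt n j"

fun normalizer_upto :: "nat \<Rightarrow> nat \<Rightarrow> lam_ring" where
  "normalizer_upto n 0 = 1"
| "normalizer_upto n (Suc k) = normalizer_upto n k * normal_factor n (Suc k)"

definition normalizer :: "nat \<Rightarrow> lam_ring" where
  "normalizer n = normalizer_upto n n"

lemma face_normal_factor:
  assumes "1 \<le> j" "j < i" "i \<le> n"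
  shows "face_elt n i * normal_factor n j = normal_factor (n - 1) j * face_elt n i"
proof -
  have n: "2 \<le> n" using assms by simp
  have "face_elt n i * normal_factor n j
      = face_elt n i - face_elt n i * degen_elt (n - 1) (j - 1) * face_elt n j"
    unfolding normal_factor_def by (simp add: algebra_simps)
  also have "face_elt n i * degen_elt (n - 1) (j - 1) = degen_elt (n - 2) (j - 1) * face_elt (n - 1) (i - 1)"
    using face_degen_above[OF n, of "j - 1" i] assms by simp
  also have "degen_elt (n - 2) (j - 1) * face_elt (n - 1) (i - 1) * face_elt n j
      = degen_elt (n - 2) (j - 1) * (face_elt (n - 1) j * face_elt n i)"
    using face_face[OF n, of j i] assms by (simp add: mult.assoc)
  finally show ?thesis
    unfolding normal_factor_def by (simp add: algebra_simps diff_diff_add numeral_2_eq_2)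
qed

lemma face_normal_factor_same: "1 \<le> i \<Longrightarrow> i \<le> n \<Longrightarrow> face_elt n i * normal_factor n i = 0"
  using face_degen_eq_one[of n "i - 1" i]
  by (simp add: normal_factor_def algebra_simps flip: mult.assoc)

lemma face_normalizer_upto_commute:
  "k < i \<Longrightarrow> i \<le> n \<Longrightarrow> face_elt n i * normalizer_upto n k = normalizer_upto (n - 1) k * face_elt n i"
proof (induction k)
  case (Suc k)
  have "face_elt n i * normalizer_upto n (Suc k)
      = normalizer_upto (n - 1) k * (face_elt n i * normal_factor n (Suc k))"
    using Suc by (simp flip: mult.assoc)
  then show ?case using face_normal_factor[of "Suc k" i n] Suc.prems by (simp add: mult.assoc)
qed simp

lemma face_normalizer_upto:
  "1 \<le> i \<Longrightarrow> i \<le> k \<Longrightarrow> k \<le> n \<Longrightarrow> face_elt n i * normalizer_upto n k = 0"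
proof (induction k)
  case (Suc k)
  show ?case
  proof (cases "i = Suc k")
    case True
    have "face_elt n i * normalizer_upto n (Suc k)
        = normalizer_upto (n - 1) k * (face_elt n i * normal_factor n i)"
      using face_normalizer_upto_commute[of k i n] True Suc.prems by (simp flip: mult.assoc)
    then show ?thesis using face_normal_factor_same[of i n] Suc.prems by simp
  next
    case False
    then show ?thesis using Suc by (simp flip: mult.assoc)
  qed
qed simp

lemma face_normalizer: "1 \<le> i \<Longrightarrow> i \<le> n \<Longrightarrow> face_elt n i * normalizer n = 0"
  unfolding normalizer_def by (rule face_normalizer_upto) auto

lemma normal_factor_degen_same:
  "j + 1 \<le> n \<Longrightarrow> normal_factor n (j + 1) * degen_elt (n - 1) j = 0"
  using face_degen_eq_one[of n j "j + 1"] by (simp add: normal_factor_def algebra_simps mult.assoc)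

lemma normal_factor_degen:
  assumes "j + 1 < k" "k \<le> n"
  shows "normal_factor n k * degen_elt (n - 1) j = degen_elt (n - 1) j * normal_factor (n - 1) (k - 1)"
proof -
  have n: "2 \<le> n" using assms by simp
  have "normal_factor n k * degen_elt (n - 1) j
      = degen_elt (n - 1) j - degen_elt (n - 1) (k - 1) * (face_elt n k * degen_elt (n - 1) j)"
    unfolding normal_factor_def by (simp add: algebra_simps)
  also have "face_elt n k * degen_elt (n - 1) j = degen_elt (n - 2) j * face_elt (n - 1) (k - 1)"
    using face_degen_above[OF n, of j k] assms by simp
  also have "degen_elt (n - 1) (k - 1) * (degen_elt (n - 2) j * face_elt (n - 1) (k - 1))
      = degen_elt (n - 1) j * degen_elt (n - 2) (k - 2) * face_elt (n - 1) (k - 1)"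
    using degen_degen[of "n - 1" j "k - 1"] assms
    by (simp add: numeral_2_eq_2 diff_diff_add flip: mult.assoc)
  finally show ?thesis
    unfolding normal_factor_def by (simp add: algebra_simps numeral_2_eq_2 diff_diff_add)
qed

lemma normalizer_upto_degen:
  "j < k \<Longrightarrow> k \<le> n \<Longrightarrow> normalizer_upto n k * degen_elt (n - 1) j = 0"
proof (induction k)
  case (Suc k)
  show ?case
  proof (cases "j = k")
    case True
    then show ?thesis using normal_factor_degen_same[of j n] Suc.prems by (simp add: mult.assoc)
  next
    case False
    then have "normal_factor n (Suc k) * degen_elt (n - 1) j
        = degen_elt (n - 1) j * normal_factor (n - 1) k"
      using normal_factor_degen[of j "Suc k" n] Suc.prems by simp
    then have "normalizer_upto n (Suc k) * degen_elt (n - 1) j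
        = normalizer_upto n k * degen_elt (n - 1) j * normal_factor (n - 1) k"
      by (simp add: mult.assoc)
    then show ?thesis using Suc False by simp
  qed
qed simp

lemma normalizer_degen: "j < n \<Longrightarrow> normalizer n * degen_elt (n - 1) j = 0"
  unfolding normalizer_def by (rule normalizer_upto_degen) auto

lemma normalizer_fixes:
  assumes "\<And>i. 1 \<le> i \<Longrightarrow> i \<le> n \<Longrightarrow> face_elt n i * y = 0"
  shows "normalizer n * y = y"
proof -
  have "k \<le> n \<Longrightarrow> normalizer_upto n k * y = y" for k
  proof (induction k)
    case (Suc k)
    have "normal_factor n (Suc k) * y = y"
      using assms[of "Suc k"] Suc.prems
      by (simp add: normal_factor_def algebra_simps mult.assoc)
    then show ?case using Suc by (simp add: mult.assoc)
  qed simp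
  then show ?thesis unfolding normalizer_def by simp
qed

inductive in_degen_ideal :: "nat \<Rightarrow> nat set \<Rightarrow> lam_ring \<Rightarrow> bool" for l A where
  zero: "in_degen_ideal l A 0"
| step: "j \<in> A \<Longrightarrow> in_degen_ideal l A x \<Longrightarrow> in_degen_ideal l A (degen_elt l j * y + x)"

lemma in_degen_ideal_degen: "j \<in> A \<Longrightarrow> in_degen_ideal l A (degen_elt l j * y)"
  using in_degen_ideal.step[OF _ in_degen_ideal.zero] by fastforce

lemma in_degen_ideal_add:
  "in_degen_ideal l A x \<Longrightarrow> in_degen_ideal l A z \<Longrightarrow> in_degen_ideal l A (x + z)"
  by (induction rule: in_degen_ideal.induct) (auto simp: add.assoc intro: in_degen_ideal.step)

lemma in_degen_ideal_uminus: "in_degen_ideal l A x \<Longrightarrow> in_degen_ideal l A (- x)"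
proof (induction rule: in_degen_ideal.induct)
  case (step j x y)
  have "- (degen_elt l j * y + x) = degen_elt l j * (- y) + - x" by simp
  then show ?case using step by (metis in_degen_ideal.step)
qed (simp add: in_degen_ideal.zero)

lemma in_degen_ideal_diff:
  "in_degen_ideal l A x \<Longrightarrow> in_degen_ideal l A z \<Longrightarrow> in_degen_ideal l A (x - z)"
  using in_degen_ideal_add[of l A x "- z"] in_degen_ideal_uminus[of l A z] by simp

lemma in_degen_ideal_mult_right: "in_degen_ideal l A x \<Longrightarrow> in_degen_ideal l A (x * z)"
proof (induction rule: in_degen_ideal.induct)
  case (step j x y)
  have "(degen_elt l j * y + x) * z = degen_elt l j * (y * z) + x * z"
    by (simp add: algebra_simps)
  then show ?case using step by (metis in_degen_ideal.step)
qed (simp add: in_degen_ideal.zero)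

lemma in_degen_ideal_neg_one_power: "in_degen_ideal l A x \<Longrightarrow> in_degen_ideal l A ((-1) ^ k * x)"
  by (cases "even k") (auto intro: in_degen_ideal_uminus)

lemma in_degen_ideal_mono: "in_degen_ideal l A x \<Longrightarrow> A \<subseteq> B \<Longrightarrow> in_degen_ideal l B x"
  by (induction rule: in_degen_ideal.induct) (auto intro: in_degen_ideal.intros)

lemma in_degen_ideal_mult_left:
  assumes "in_degen_ideal l A x"
    and "\<And>j y. j \<in> A \<Longrightarrow> in_degen_ideal m B (z * (degen_elt l j * y))"
  shows "in_degen_ideal m B (z * x)"
  using assms
  by (induction rule: in_degen_ideal.induct)
    (auto simp: distrib_left intro: in_degen_ideal_add in_degen_ideal.zero)

lemma annihilates_degen_ideal:
  "in_degen_ideal l A x \<Longrightarrow> (\<And>j. j \<in> A \<Longrightarrow> z * degen_elt l j = 0) \<Longrightarrow> z * x = 0"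
  by (induction rule: in_degen_ideal.induct) (simp_all add: distrib_left flip: mult.assoc)

lemma one_minus_normalizer_degenerate: "in_degen_ideal (n - 1) {..<n} (1 - normalizer n)"
proof -
  have "k \<le> n \<Longrightarrow> in_degen_ideal (n - 1) {..<k} (1 - normalizer_upto n k)" for k
  proof (induction k)
    case (Suc k)
    define x where "x = 1 - normalizer_upto n k"
    have x: "in_degen_ideal (n - 1) {..<Suc k} x"
      using Suc in_degen_ideal_mono[of "n - 1" "{..<k}" x] unfolding x_def by auto
    have d: "in_degen_ideal (n - 1) {..<Suc k} (degen_elt (n - 1) k * face_elt n (Suc k))"
      by (rule in_degen_ideal_degen) simp
    have "1 - normalizer_upto n (Suc k)
        = x + degen_elt (n - 1) k * face_elt n (Suc k) - x * (degen_elt (n - 1) k * face_elt n (Suc k))"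
      by (simp add: x_def normal_factor_def algebra_simps)
    then show ?case
      using x d by (simp add: in_degen_ideal_add in_degen_ideal_diff in_degen_ideal_mult_right)
  qed (simp add: in_degen_ideal.zero)
  then show ?thesis unfolding normalizer_def by simp
qed

text \<open>\<open>N\<^sub>m\<close> fixes \<open>x N\<^sub>n\<close>, and \<open>N\<^sub>m x\<close> kills \<open>1 - N\<^sub>n\<close>, which is degenerate.\<close>

lemma normalizer_commute:
  assumes faces: "\<And>i. 1 \<le> i \<Longrightarrow> i \<le> m \<Longrightarrow> face_elt m i * (x * normalizer n) = 0"
    and degens: "\<And>j. j < n \<Longrightarrow> normalizer m * x * degen_elt (n - 1) j = 0"
  shows "x * normalizer n = normalizer m * x"
proof -
  have "normalizer m * x * (1 - normalizer n) = 0"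
    using annihilates_degen_ideal[OF one_minus_normalizer_degenerate] degens by blast
  then have "normalizer m * (x * normalizer n) = normalizer m * x"
    by (simp add: algebra_simps mult.assoc)
  then show ?thesis using normalizer_fixes[OF faces] by simp
qed

definition face_alt :: "nat \<Rightarrow> lam_ring" where
  "face_alt n = (\<Sum>i\<le>n. (-1) ^ i * face_elt n i)"

definition degen_alt :: "nat \<Rightarrow> lam_ring" where
  "degen_alt n = (\<Sum>i\<le>n + 1. (-1) ^ i * degen_elt n i)"

lemma mult_neg_one_power_commute: "x * ((-1) ^ i * y) = (-1) ^ i * (x * (y :: 'a :: ring_1))"
  by (cases "even i") simp_all

lemma alternating_sum_adjacent_pair:
  assumes "j + 1 \<le> m"
  shows "(\<Sum>i\<le>m. (-1) ^ i * (if i = j \<or> i = j + 1 then x else 0)) = (0 :: 'a :: ring_1)"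
proof -
  have "(\<Sum>i\<le>m. (-1) ^ i * (if i = j \<or> i = j + 1 then x else 0))
      = (\<Sum>i\<le>m. (if i = j then (-1) ^ j * x else 0) + (if i = j + 1 then (-1) ^ (j + 1) * x else 0))"
    by (rule sum.cong) auto
  also have "\<dots> = (-1) ^ j * x + (-1) ^ (j + 1) * x"
    using assms by (simp add: sum.distrib)
  finally show ?thesis by simp
qed

lemma keys_face_alt: "1 \<le> n \<Longrightarrow> Poly_Mapping.keys (face_alt n) \<subseteq> lam_keys (n - 1) n"
  unfolding face_alt_def
  by (intro keys_sum_subset) (simp add: keys_neg_one_power_mult keys_face_elt)

lemma keys_degen_alt: "Poly_Mapping.keys (degen_alt n) \<subseteq> lam_keys (n + 1) n"
  unfolding degen_alt_def
  by (intro keys_sum_subset) (simp add: keys_neg_one_power_mult keys_degen_elt)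

lemma normalizer_face_degen:
  assumes "i \<le> n" "j < n"
  shows "normalizer (n - 1) * (face_elt n i * degen_elt (n - 1) j)
    = (if i = j \<or> i = j + 1 then normalizer (n - 1) else 0)"
proof -
  consider "i = j \<or> i = j + 1" | "i < j" | "j + 1 < i" by linarith
  then show ?thesis
  proof cases
    case 1
    then show ?thesis using face_degen_eq_one[of n j i] assms by auto
  next
    case 2
    then have "face_elt n i * degen_elt (n - 1) j = degen_elt (n - 2) (j - 1) * face_elt (n - 1) i"
      using face_degen_below[of n i j] assms by simp
    moreover have "normalizer (n - 1) * degen_elt (n - 2) (j - 1) = 0"
      using normalizer_degen[of "j - 1" "n - 1"] 2 assms by (simp add: diff_diff_add numeral_2_eq_2)
    ultimately show ?thesis using 2 by (simp flip: mult.assoc)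
  next
    case 3
    then have "face_elt n i * degen_elt (n - 1) j = degen_elt (n - 2) j * face_elt (n - 1) (i - 1)"
      using face_degen_above[of n j i] assms by simp
    moreover have "normalizer (n - 1) * degen_elt (n - 2) j = 0"
      using normalizer_degen[of j "n - 1"] 3 assms by (simp add: diff_diff_add numeral_2_eq_2)
    ultimately show ?thesis using 3 by (simp flip: mult.assoc)
  qed
qed

lemma face_degen_normalizer:
  assumes "i \<le> n" "k \<le> n + 1"
  shows "face_elt (n + 1) (i + 1) * (degen_elt n k * normalizer n)
    = (if k = i \<or> k = i + 1 then normalizer n else 0)"
proof -
  consider "k = i \<or> k = i + 1" | "i + 1 < k" | "k < i" by linarith
  then show ?thesis
  proof cases
    case 1
    then show ?thesis
      using face_degen_eq_one[of "n + 1" k "i + 1"] assms by (auto simp flip: mult.assoc)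
  next
    case 2
    then have "face_elt (n + 1) (i + 1) * degen_elt n k = degen_elt (n - 1) (k - 1) * face_elt n (i + 1)"
      using face_degen_below[of "n + 1" "i + 1" k] assms by simp
    then show ?thesis
      using face_normalizer[of "i + 1" n] 2 assms
      by (simp add: mult.assoc flip: mult.assoc[of _ _ "normalizer n"])
  next
    case 3
    then have "face_elt (n + 1) (i + 1) * degen_elt n k = degen_elt (n - 1) k * face_elt n i"
      using face_degen_above[of "n + 1" k "i + 1"] assms by simp
    then show ?thesis
      using face_normalizer[of i n] 3 assms
      by (simp add: mult.assoc flip: mult.assoc[of _ _ "normalizer n"])
  qed
qed

lemma face_alt_normalizer:
  assumes "1 \<le> n"
  shows "face_alt n * normalizer n = normalizer (n - 1) * face_alt n"
proof (rule normalizer_commute)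
  have first_face: "face_alt n * normalizer n = face_elt n 0 * normalizer n"
  proof -
    have "face_alt n * normalizer n = (\<Sum>i\<le>n. (-1) ^ i * (face_elt n i * normalizer n))"
      unfolding face_alt_def by (simp add: sum_distrib_right mult.assoc)
    also have "\<dots> = (\<Sum>i\<le>n. if i = 0 then face_elt n 0 * normalizer n else 0)"
      by (rule sum.cong) (auto simp: face_normalizer)
    finally show ?thesis by simp
  qed
  fix i assume i: "1 \<le> i" "i \<le> n - 1"
  have "face_elt (n - 1) i * face_elt n 0 = face_elt (n - 1) 0 * face_elt n (i + 1)"
    using face_face[of n 0 "i + 1"] i by simp
  then have "face_elt (n - 1) i * (face_alt n * normalizer n)
      = face_elt (n - 1) 0 * (face_elt n (i + 1) * normalizer n)"
    by (simp add: first_face flip: mult.assoc)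
  then show "face_elt (n - 1) i * (face_alt n * normalizer n) = 0"
    using face_normalizer[of "i + 1" n] i by simp
next
  fix j assume j: "j < n"
  have "normalizer (n - 1) * face_alt n * degen_elt (n - 1) j
      = (\<Sum>i\<le>n. (-1) ^ i * (normalizer (n - 1) * (face_elt n i * degen_elt (n - 1) j)))"
    unfolding face_alt_def
    by (simp add: sum_distrib_left sum_distrib_right mult_neg_one_power_commute mult.assoc)
  also have "\<dots> = (\<Sum>i\<le>n. (-1) ^ i * (if i = j \<or> i = j + 1 then normalizer (n - 1) else 0))"
    by (intro sum.cong refl) (use normalizer_face_degen[of _ n j] j in simp)
  also have "\<dots> = 0"
    by (rule alternating_sum_adjacent_pair) (use j in simp)
  finally show "normalizer (n - 1) * face_alt n * degen_elt (n - 1) j = 0" .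
qed

lemma degen_alt_normalizer: "degen_alt n * normalizer n = normalizer (n + 1) * degen_alt n"
proof (rule normalizer_commute)
  fix i assume "1 \<le> i" "i \<le> n + 1"
  then obtain h where i: "i = h + 1" "h \<le> n" by (metis add.commute le_add_diff_inverse add_le_cancel_left)
  have "face_elt (n + 1) i * (degen_alt n * normalizer n)
      = (\<Sum>k\<le>n + 1. (-1) ^ k * (face_elt (n + 1) (h + 1) * (degen_elt n k * normalizer n)))"
    unfolding degen_alt_def i
    by (simp add: sum_distrib_left sum_distrib_right mult_neg_one_power_commute mult.assoc
        del: sum.atMost_Suc)
  also have "\<dots> = (\<Sum>k\<le>n + 1. (-1) ^ k * (if k = h \<or> k = h + 1 then normalizer n else 0))"
    by (intro sum.cong refl) (use face_degen_normalizer[of h n] i in simp)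
  also have "\<dots> = 0"
    by (rule alternating_sum_adjacent_pair) (use i in simp)
  finally show "face_elt (n + 1) i * (degen_alt n * normalizer n) = 0" .
next
  fix j assume j: "j < n"
  have killed: "normalizer (n + 1) * (degen_elt n k * degen_elt (n - 1) j) = 0" if "k \<le> n + 1" for k
  proof (cases "k \<le> j")
    case True
    then have "degen_elt n k * degen_elt (n - 1) j = degen_elt n (j + 1) * degen_elt (n - 1) k"
      using degen_degen[of n k "j + 1"] j by simp
    then show ?thesis using normalizer_degen[of "j + 1" "n + 1"] j by (simp flip: mult.assoc)
  next
    case False
    then have "degen_elt n k * degen_elt (n - 1) j = degen_elt n j * degen_elt (n - 1) (k - 1)"
      using degen_degen[of n j k] j that by simp
    then show ?thesis using normalizer_degen[of j "n + 1"] j by (simp flip: mult.assoc)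
  qed
  have "normalizer (n + 1) * degen_alt n * degen_elt (n - 1) j
      = (\<Sum>k\<le>n + 1. (-1) ^ k * (normalizer (n + 1) * (degen_elt n k * degen_elt (n - 1) j)))"
    unfolding degen_alt_def
    by (simp add: sum_distrib_left sum_distrib_right mult_neg_one_power_commute mult.assoc
        del: sum.atMost_Suc)
  also have "\<dots> = 0" using killed by (simp del: sum.atMost_Suc)
  finally show "normalizer (n + 1) * degen_alt n * degen_elt (n - 1) j = 0" .
qed

section \<open>The Dwyer--Kan operator\<close>

text \<open>The Karoubi operator without its sign, \<open>\<kappa>\<^sub>m = (-1)\<^sup>m karoubi_elt m\<close>: the term
  \<open>\<partial>\<^sub>m\<^sub>+\<^sub>1\<^sub>,\<^sub>0 s\<^sub>m\<^sub>,\<^sub>m\<^sub>+\<^sub>1\<close> of \<open>\<kappa>\<^sub>m\<close> is the cyclic shift \<open>t\<close>.\<close>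

definition karoubi_elt :: "nat \<Rightarrow> lam_ring" where
  "karoubi_elt m = cyc_elt - degen_elt (m - 1) m * face_elt m 0"

definition dk_elt :: "nat \<Rightarrow> lam_ring" where
  "dk_elt n = (-1) ^ n * (face_elt (n + 1) 0 * karoubi_elt (n + 1) ^ n * degen_elt n (n + 1))"

lemma face_karoubi:
  assumes "1 \<le> j" "j \<le> n"
  shows "face_elt (n + 1) j * karoubi_elt (n + 1) = karoubi_elt n * face_elt (n + 1) (j + 1)"
proof -
  have n: "2 \<le> n + 1" using assms by simp
  have "face_elt (n + 1) j * karoubi_elt (n + 1)
      = face_elt (n + 1) j * cyc_elt - (face_elt (n + 1) j * degen_elt n (n + 1)) * face_elt (n + 1) 0"
    unfolding karoubi_elt_def by (simp add: algebra_simps)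
  also have "\<dots> = cyc_elt * face_elt (n + 1) (j + 1) - degen_elt (n - 1) n * (face_elt n j * face_elt (n + 1) 0)"
    using face_cyc[of j n] face_degen_below[OF n, of j "n + 1"] assms by (simp add: mult.assoc)
  also have "face_elt n j * face_elt (n + 1) 0 = face_elt n 0 * face_elt (n + 1) (j + 1)"
    using face_face[OF n, of 0 "j + 1"] assms by simp
  finally show ?thesis unfolding karoubi_elt_def by (simp add: algebra_simps)
qed

lemma last_face_karoubi: "face_elt (n + 1) (n + 1) * karoubi_elt (n + 1) = 0"
proof -
  have "face_elt (n + 1) (n + 1) * karoubi_elt (n + 1)
      = face_elt (n + 1) (n + 1) * cyc_elt - (face_elt (n + 1) (n + 1) * degen_elt n (n + 1)) * face_elt (n + 1) 0"
    unfolding karoubi_elt_def by (simp add: algebra_simps)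
  then show ?thesis using face_last_cyc[of n] face_degen_eq_one[of "n + 1" "n + 1" "n + 1"] by simp
qed

lemma face_karoubi_power:
  "1 \<le> j \<Longrightarrow> j + k \<le> n + 1 \<Longrightarrow>
    face_elt (n + 1) j * karoubi_elt (n + 1) ^ k = karoubi_elt n ^ k * face_elt (n + 1) (j + k)"
proof (induction k arbitrary: j)
  case (Suc k)
  have "face_elt (n + 1) j * karoubi_elt (n + 1) ^ Suc k
      = karoubi_elt n * (face_elt (n + 1) (j + 1) * karoubi_elt (n + 1) ^ k)"
    using face_karoubi[of j n] Suc.prems by (simp flip: mult.assoc)
  then show ?case using Suc.IH[of "j + 1"] Suc.prems by (simp add: mult.assoc)
qed simp

lemma face_karoubi_power_eq_zero:
  assumes "1 \<le> j" "j \<le> n + 1" "n + 1 < j + k"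
  shows "face_elt (n + 1) j * karoubi_elt (n + 1) ^ k = 0"
proof -
  obtain r where k: "k = (n + 1 - j) + Suc r" using assms by (metis add_Suc_right less_imp_Suc_add add_diff_inverse_nat
        add_less_cancel_left not_less)
  have "face_elt (n + 1) j * karoubi_elt (n + 1) ^ k
      = (face_elt (n + 1) j * karoubi_elt (n + 1) ^ (n + 1 - j)) * karoubi_elt (n + 1) * karoubi_elt (n + 1) ^ r"
    unfolding k power_add power_Suc by (simp only: mult.assoc)
  also have "\<dots> = karoubi_elt n ^ (n + 1 - j) * (face_elt (n + 1) (n + 1) * karoubi_elt (n + 1)) * karoubi_elt (n + 1) ^ r"
    using face_karoubi_power[of j "n + 1 - j" n] assms by (simp add: mult.assoc)
  finally show ?thesis using last_face_karoubi[of n] by simp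
qed

lemma face_dk_elt:
  assumes "1 \<le> i" "i \<le> n"
  shows "face_elt n i * dk_elt n = 0"
proof -
  have "face_elt n i * face_elt (n + 1) 0 = face_elt n 0 * face_elt (n + 1) (i + 1)"
    using face_face[of "n + 1" 0 "i + 1"] assms by simp
  then have "face_elt n i * (face_elt (n + 1) 0 * karoubi_elt (n + 1) ^ n * degen_elt n (n + 1))
      = face_elt n 0 * (face_elt (n + 1) (i + 1) * karoubi_elt (n + 1) ^ n) * degen_elt n (n + 1)"
    by (simp flip: mult.assoc)
  then show ?thesis
    using face_karoubi_power_eq_zero[of "i + 1" n n] assms
    by (simp add: dk_elt_def mult_neg_one_power_commute)
qed

lemma karoubi_degen:
  assumes "1 \<le> j" "j < n"
  shows "karoubi_elt n * degen_elt (n - 1) j = degen_elt (n - 1) (j - 1) * karoubi_elt (n - 1)"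
proof -
  have n: "2 \<le> n" using assms by simp
  have "karoubi_elt n * degen_elt (n - 1) j
      = cyc_elt * degen_elt (n - 1) j - degen_elt (n - 1) n * (face_elt n 0 * degen_elt (n - 1) j)"
    unfolding karoubi_elt_def by (simp add: algebra_simps)
  also have "\<dots> = degen_elt (n - 1) (j - 1) * cyc_elt
      - (degen_elt (n - 1) n * degen_elt (n - 2) (j - 1)) * face_elt (n - 1) 0"
    using cyc_degen[of j n] face_degen_below[OF n, of 0 j] assms by (simp add: mult.assoc)
  also have "degen_elt (n - 1) n * degen_elt (n - 2) (j - 1)
      = degen_elt (n - 1) (j - 1) * degen_elt (n - 2) (n - 1)"
    using degen_degen[of "n - 1" "j - 1" n] assms by (simp add: numeral_2_eq_2 diff_diff_add)
  finally show ?thesis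
    unfolding karoubi_elt_def by (simp add: algebra_simps numeral_2_eq_2 diff_diff_add)
qed

lemma karoubi_last_degen:
  assumes "1 \<le> n"
  shows "karoubi_elt n * degen_elt (n - 1) n
    = degen_elt (n - 1) (n - 1) * cyc_elt - degen_elt (n - 1) n * cyc_elt"
proof -
  have "karoubi_elt n * degen_elt (n - 1) n
      = cyc_elt * degen_elt (n - 1) n - degen_elt (n - 1) n * (face_elt n 0 * degen_elt (n - 1) n)"
    unfolding karoubi_elt_def by (simp add: algebra_simps)
  then show ?thesis using cyc_degen[of n n] face_zero_degen_last[of "n - 1"] assms by simp
qed

lemma karoubi_power_last_degen:
  "k \<le> n \<Longrightarrow> in_degen_ideal (n - 1) {n - k..n} (karoubi_elt n ^ k * degen_elt (n - 1) n)"
proof (induction k)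
  case 0
  then show ?case using in_degen_ideal_degen[of n "{n..n}" "n - 1" 1] by simp
next
  case (Suc k)
  have "in_degen_ideal (n - 1) {n - Suc k..n} (karoubi_elt n * (karoubi_elt n ^ k * degen_elt (n - 1) n))"
  proof (rule in_degen_ideal_mult_left)
    show "in_degen_ideal (n - 1) {n - k..n} (karoubi_elt n ^ k * degen_elt (n - 1) n)"
      using Suc by simp
    fix j y assume j: "j \<in> {n - k..n}"
    show "in_degen_ideal (n - 1) {n - Suc k..n} (karoubi_elt n * (degen_elt (n - 1) j * y))"
    proof (cases "j < n")
      case True
      have "karoubi_elt n * (degen_elt (n - 1) j * y) = degen_elt (n - 1) (j - 1) * (karoubi_elt (n - 1) * y)"
        using karoubi_degen[of j n] True j Suc.prems by (simp flip: mult.assoc)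
      moreover have "j - 1 \<in> {n - Suc k..n}" using j True Suc.prems by auto
      ultimately show ?thesis by (simp add: in_degen_ideal_degen)
    next
      case False
      then have "j = n" using j by simp
      then have "karoubi_elt n * (degen_elt (n - 1) j * y)
          = (degen_elt (n - 1) (n - 1) * cyc_elt - degen_elt (n - 1) n * cyc_elt) * y"
        using karoubi_last_degen[of n] Suc.prems by (simp flip: mult.assoc)
      then have "karoubi_elt n * (degen_elt (n - 1) j * y)
          = degen_elt (n - 1) (n - 1) * (cyc_elt * y) - degen_elt (n - 1) n * (cyc_elt * y)"
        by (simp add: algebra_simps)
      moreover have "n - 1 \<in> {n - Suc k..n}" "n \<in> {n - Suc k..n}" using Suc.prems by auto
      ultimately show ?thesis by (simp add: in_degen_ideal_diff in_degen_ideal_degen)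
    qed
  qed
  then show ?case by (simp add: mult.assoc)
qed

lemma cyc_mult_in_degen_ideal:
  assumes "in_degen_ideal (n - 1) A x" "\<And>j. j \<in> A \<Longrightarrow> 1 \<le> j \<and> j \<le> n \<and> j - 1 \<in> B"
  shows "in_degen_ideal (n - 1) B (cyc_elt * x)"
proof (rule in_degen_ideal_mult_left[OF assms(1)])
  fix j y assume j: "j \<in> A"
  have "cyc_elt * (degen_elt (n - 1) j * y) = degen_elt (n - 1) (j - 1) * (cyc_elt * y)"
    using cyc_degen[of j n] assms(2)[OF j] by (simp flip: mult.assoc)
  then show "in_degen_ideal (n - 1) B (cyc_elt * (degen_elt (n - 1) j * y))"
    using assms(2)[OF j] by (simp add: in_degen_ideal_degen)
qed

lemma dk_partial_congruent_cyc_power: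
  "k \<le> n \<Longrightarrow> in_degen_ideal (n - 1) {n - k..<n}
    (face_elt (n + 1) 0 * karoubi_elt (n + 1) ^ k * degen_elt n (n + 1) - (-1) ^ k * cyc_elt ^ (k + 1))"
proof (induction k)
  case 0
  then show ?case using face_zero_degen_last[of n] by (simp add: in_degen_ideal.zero)
next
  case (Suc k)
  let ?y = "\<lambda>k. face_elt (n + 1) 0 * karoubi_elt (n + 1) ^ k * degen_elt n (n + 1)"
  define x where "x = ?y k - (-1) ^ k * cyc_elt ^ (k + 1)"
  have x: "in_degen_ideal (n - 1) {n - k..<n} x" using Suc unfolding x_def by simp
  have first: "face_elt (n + 1) 0 * karoubi_elt (n + 1) = cyc_elt * face_elt (n + 1) 1 - cyc_elt * face_elt (n + 1) 0"
    using face_cyc[of 0 n] face_zero_degen_last[of n]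
    by (simp add: karoubi_elt_def algebra_simps flip: mult.assoc)
  have "face_elt (n + 1) 1 * karoubi_elt (n + 1) ^ k * degen_elt n (n + 1)
      = karoubi_elt n ^ k * (face_elt (n + 1) (k + 1) * degen_elt n (n + 1))"
    using face_karoubi_power[of 1 k n] Suc.prems by (simp add: mult.assoc)
  also have "face_elt (n + 1) (k + 1) * degen_elt n (n + 1) = degen_elt (n - 1) n * face_elt n (k + 1)"
    using face_degen_below[of "n + 1" "k + 1" "n + 1"] Suc.prems by simp
  finally have second: "face_elt (n + 1) 1 * karoubi_elt (n + 1) ^ k * degen_elt n (n + 1)
      = karoubi_elt n ^ k * degen_elt (n - 1) n * face_elt n (k + 1)"
    by (simp add: mult.assoc)
  have "?y (Suc k) = (face_elt (n + 1) 0 * karoubi_elt (n + 1)) * karoubi_elt (n + 1) ^ k * degen_elt n (n + 1)"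
    by (simp only: power_Suc mult.assoc)
  also have "\<dots> = cyc_elt * (face_elt (n + 1) 1 * karoubi_elt (n + 1) ^ k * degen_elt n (n + 1)) - cyc_elt * ?y k"
    unfolding first by (simp add: algebra_simps)
  finally have "?y (Suc k) = cyc_elt * (karoubi_elt n ^ k * degen_elt (n - 1) n * face_elt n (k + 1)) - cyc_elt * ?y k"
    unfolding second .
  then have "?y (Suc k) - (-1) ^ Suc k * cyc_elt ^ (Suc k + 1)
      = cyc_elt * (karoubi_elt n ^ k * degen_elt (n - 1) n * face_elt n (k + 1)) - cyc_elt * x"
    unfolding x_def by (simp add: algebra_simps mult_neg_one_power_commute)
  moreover have "in_degen_ideal (n - 1) {n - Suc k..<n} (cyc_elt * (karoubi_elt n ^ k * degen_elt (n - 1) n * face_elt n (k + 1)))"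
    by (rule cyc_mult_in_degen_ideal[OF in_degen_ideal_mult_right[OF karoubi_power_last_degen]])
      (use Suc.prems in auto)
  moreover have "in_degen_ideal (n - 1) {n - Suc k..<n} (cyc_elt * x)"
    by (rule cyc_mult_in_degen_ideal[OF x]) (use Suc.prems in auto)
  ultimately show ?case by (simp add: in_degen_ideal_diff)
qed

lemma dk_elt_eq_normalizer_period: "dk_elt n = normalizer n * period_elt n"
proof -
  have normalized: "normalizer n * dk_elt n = dk_elt n"
    by (rule normalizer_fixes) (simp add: face_dk_elt)
  have "in_degen_ideal (n - 1) {0..<n} ((-1) ^ n *
      (face_elt (n + 1) 0 * karoubi_elt (n + 1) ^ n * degen_elt n (n + 1) - (-1) ^ n * cyc_elt ^ (n + 1)))"
    using in_degen_ideal_neg_one_power dk_partial_congruent_cyc_power[of n n] by simp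
  moreover have "(-1) ^ n * (face_elt (n + 1) 0 * karoubi_elt (n + 1) ^ n * degen_elt n (n + 1)
      - (-1) ^ n * cyc_elt ^ (n + 1)) = dk_elt n - period_elt n"
  proof -
    have "(-1) ^ n * ((-1) ^ n * x) = (x :: lam_ring)" for x by (cases "even n") simp_all
    then show ?thesis by (simp only: dk_elt_def cyc_elt_power right_diff_distrib)
  qed
  ultimately have "in_degen_ideal (n - 1) {0..<n} (dk_elt n - period_elt n)" by simp
  then have "normalizer n * (dk_elt n - period_elt n) = 0"
    by (rule annihilates_degen_ideal) (use normalizer_degen in auto)
  then show ?thesis using normalized by (simp add: algebra_simps)
qed

lemma face_alt_dk_elt: "1 \<le> n \<Longrightarrow> face_alt n * dk_elt n = dk_elt (n - 1) * face_alt n"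
  using face_alt_normalizer[of n] period_elt_commute[OF keys_face_alt, of n]
  by (simp add: dk_elt_eq_normalizer_period flip: mult.assoc) (simp add: mult.assoc)

lemma degen_alt_dk_elt: "degen_alt n * dk_elt n = dk_elt (n + 1) * degen_alt n"
  using degen_alt_normalizer[of n] period_elt_commute[OF keys_degen_alt, of n]
  by (simp add: dk_elt_eq_normalizer_period flip: mult.assoc) (simp add: mult.assoc)

section \<open>Evaluation in a duplicial module\<close>

lemma free_Abelian_group_hom_eqI:
  fixes S :: "'a set" and h h' :: "('a \<Rightarrow>\<^sub>0 int) \<Rightarrow> 'b"
  assumes "group H"
    and h: "h \<in> hom (free_Abelian_group S) H" and h': "h' \<in> hom (free_Abelian_group S) H"
    and gen: "\<And>a. a \<in> S \<Longrightarrow> h (frag_of a) = h' (frag_of a)"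
    and x: "Poly_Mapping.keys x \<subseteq> S"
  shows "h x = h' x"
proof -
  interpret h: group_hom "free_Abelian_group S" H h
    using assms by (simp add: group_hom_def group_hom_axioms_def)
  interpret h': group_hom "free_Abelian_group S" H h'
    using assms by (simp add: group_hom_def group_hom_axioms_def)
  show ?thesis
  proof (rule free_Abelian_group_induct[where P = "\<lambda>x. h x = h' x", OF x])
    show "h 0 = h' 0" using h.hom_one h'.hom_one by simp
  next
    fix a b :: "'a \<Rightarrow>\<^sub>0 int"
    assume a: "Poly_Mapping.keys a \<subseteq> S" and b: "Poly_Mapping.keys b \<subseteq> S"
      and ih: "h a = h' a" "h b = h' b"
    let ?F = "free_Abelian_group S"
    have carrier: "a \<in> carrier ?F" "inv\<^bsub>?F\<^esub> b \<in> carrier ?F" "b \<in> carrier ?F"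
      using a b by simp_all
    have "a - b = a \<otimes>\<^bsub>?F\<^esub> inv\<^bsub>?F\<^esub> b" using b by simp
    then show "h (a - b) = h' (a - b)"
      by (simp only: h.hom_mult[OF carrier(1,2)] h'.hom_mult[OF carrier(1,2)]
          h.hom_inv[OF carrier(3)] h'.hom_inv[OF carrier(3)] ih)
  qed (rule gen)
qed

definition hom_group :: "('o, 'm) preadd_cat \<Rightarrow> 'o \<Rightarrow> 'o \<Rightarrow> 'm monoid" where
  "hom_group C a b = \<lparr>carrier = Hom C a b, monoid.mult = pls C a b, one = zer C a b\<rparr>"

lemma hom_group_simps [simp]:
  "carrier (hom_group C a b) = Hom C a b"
  "x \<otimes>\<^bsub>hom_group C a b\<^esub> y = pls C a b x y"
  "\<one>\<^bsub>hom_group C a b\<^esub> = zer C a b"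
  by (simp_all add: hom_group_def)

context
  fixes C :: "('o, 'm) preadd_cat"
  assumes preadditive: "preadditive C"
begin

lemma zer_in_Hom: "a \<in> Ob C \<Longrightarrow> b \<in> Ob C \<Longrightarrow> zer C a b \<in> Hom C a b"
  using preadditive unfolding preadditive_def by blast

lemma pls_in_Hom:
  "a \<in> Ob C \<Longrightarrow> b \<in> Ob C \<Longrightarrow> f \<in> Hom C a b \<Longrightarrow> g \<in> Hom C a b \<Longrightarrow> pls C a b f g \<in> Hom C a b"
  using preadditive unfolding preadditive_def by blast

lemma ng_in_Hom: "a \<in> Ob C \<Longrightarrow> b \<in> Ob C \<Longrightarrow> f \<in> Hom C a b \<Longrightarrow> ng C a b f \<in> Hom C a b"
  using preadditive unfolding preadditive_def by blast

lemma pls_assoc: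
  "a \<in> Ob C \<Longrightarrow> b \<in> Ob C \<Longrightarrow> f \<in> Hom C a b \<Longrightarrow> g \<in> Hom C a b \<Longrightarrow> h \<in> Hom C a b \<Longrightarrow>
    pls C a b (pls C a b f g) h = pls C a b f (pls C a b g h)"
  using preadditive unfolding preadditive_def by blast

lemma pls_commute:
  "a \<in> Ob C \<Longrightarrow> b \<in> Ob C \<Longrightarrow> f \<in> Hom C a b \<Longrightarrow> g \<in> Hom C a b \<Longrightarrow> pls C a b f g = pls C a b g f"
  using preadditive unfolding preadditive_def by blast

lemma pls_zer: "a \<in> Ob C \<Longrightarrow> b \<in> Ob C \<Longrightarrow> f \<in> Hom C a b \<Longrightarrow> pls C a b (zer C a b) f = f"
  using preadditive unfolding preadditive_def by blast

lemma pls_ng: "a \<in> Ob C \<Longrightarrow> b \<in> Ob C \<Longrightarrow> f \<in> Hom C a b \<Longrightarrow> pls C a b (ng C a b f) f = zer C a b"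
  using preadditive unfolding preadditive_def by blast

lemma cmp_in_Hom:
  "a \<in> Ob C \<Longrightarrow> b \<in> Ob C \<Longrightarrow> c \<in> Ob C \<Longrightarrow> f \<in> Hom C a b \<Longrightarrow> g \<in> Hom C b c \<Longrightarrow>
    cmp C a b c g f \<in> Hom C a c"
  using preadditive unfolding preadditive_def by (elim conjE) blast

lemma cmp_pls_left:
  "a \<in> Ob C \<Longrightarrow> b \<in> Ob C \<Longrightarrow> c \<in> Ob C \<Longrightarrow> f \<in> Hom C a b \<Longrightarrow> g \<in> Hom C b c \<Longrightarrow> g' \<in> Hom C b c \<Longrightarrow>
    cmp C a b c (pls C b c g g') f = pls C a c (cmp C a b c g f) (cmp C a b c g' f)"
  using preadditive unfolding preadditive_def by blast

lemma cmp_pls_right: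
  "a \<in> Ob C \<Longrightarrow> b \<in> Ob C \<Longrightarrow> c \<in> Ob C \<Longrightarrow> f \<in> Hom C a b \<Longrightarrow> f' \<in> Hom C a b \<Longrightarrow> g \<in> Hom C b c \<Longrightarrow>
    cmp C a b c g (pls C a b f f') = pls C a c (cmp C a b c g f) (cmp C a b c g f')"
  using preadditive unfolding preadditive_def by blast

lemma comm_group_hom_group:
  assumes "a \<in> Ob C" "b \<in> Ob C"
  shows "comm_group (hom_group C a b)"
proof (rule comm_groupI)
  fix f assume "f \<in> carrier (hom_group C a b)"
  then show "\<exists>g\<in>carrier (hom_group C a b). g \<otimes>\<^bsub>hom_group C a b\<^esub> f = \<one>\<^bsub>hom_group C a b\<^esub>"
    using assms ng_in_Hom pls_ng by (auto intro!: bexI[of _ "ng C a b f"])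
qed (use assms zer_in_Hom pls_in_Hom pls_assoc pls_commute pls_zer in \<open>simp_all\<close>)

end

locale duplicial_module =
  fixes C :: "('o, 'm) preadd_cat"
    and Mo :: "nat \<Rightarrow> 'o"
    and Mm :: "nat \<Rightarrow> nat \<Rightarrow> (int \<Rightarrow> int) \<Rightarrow> 'm"
  assumes preadditive: "preadditive C"
    and duplicial: "duplicial C Mo Mm"
begin

text \<open>\<open>homs m n\<close> consists of the morphisms \<open>M\<^sub>n \<rightarrow> M\<^sub>m\<close>, indexed like \<open>\<Lambda>\<^sub>+([m], [n])\<close>.\<close>

abbreviation homs :: "nat \<Rightarrow> nat \<Rightarrow> 'm monoid" where
  "homs m n \<equiv> hom_group C (Mo n) (Mo m)"

abbreviation comp_M :: "nat \<Rightarrow> nat \<Rightarrow> nat \<Rightarrow> 'm \<Rightarrow> 'm \<Rightarrow> 'm" where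
  "comp_M l m n x y \<equiv> cmp C (Mo n) (Mo m) (Mo l) x y"

lemma obj: "Mo n \<in> Ob C"
  using duplicial by (simp add: duplicial_def)

lemma comm_group_homs: "comm_group (homs m n)"
  by (rule comm_group_hom_group[OF preadditive obj obj])

lemma group_homs: "group (homs m n)"
  using comm_group_homs by (simp add: comm_group_def)

lemma Mm_in_Hom: "f \<in> lam_hom m n \<Longrightarrow> Mm m n f \<in> Hom C (Mo n) (Mo m)"
  using duplicial by (simp add: duplicial_def)

lemma Mm_comp:
  "f \<in> lam_hom l m \<Longrightarrow> g \<in> lam_hom m n \<Longrightarrow> Mm l n (g \<circ> f) = comp_M l m n (Mm l m f) (Mm m n g)"
  using duplicial by (simp add: duplicial_def)

lemma comp_in_Hom:
  "x \<in> Hom C (Mo m) (Mo l) \<Longrightarrow> y \<in> Hom C (Mo n) (Mo m) \<Longrightarrow> comp_M l m n x y \<in> Hom C (Mo n) (Mo l)"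
  using cmp_in_Hom[OF preadditive obj obj obj] by simp

lemma inv_homs: "x \<in> Hom C (Mo n) (Mo m) \<Longrightarrow> inv\<^bsub>homs m n\<^esub> x = ng C (Mo n) (Mo m) x"
  by (rule group.inv_equality[OF group_homs])
    (use ng_in_Hom[OF preadditive obj obj] pls_ng[OF preadditive obj obj] in \<open>simp_all\<close>)

text \<open>The additive extension of \<open>M\<close> to the elements of the monoid ring supported in
  \<open>\<Lambda>\<^sub>+([m], [n])\<close>; on other elements its value is unspecified.\<close>

definition ev :: "nat \<Rightarrow> nat \<Rightarrow> lam_ring \<Rightarrow> 'm" where
  "ev m n = (SOME h. h \<in> hom (free_Abelian_group (lam_keys m n)) (homs m n)
                 \<and> (\<forall>k \<in> lam_keys m n. h (frag_of k) = Mm m n (app k)))"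

lemma ev_hom: "ev m n \<in> hom (free_Abelian_group (lam_keys m n)) (homs m n)"
  and ev_frag_of: "k \<in> lam_keys m n \<Longrightarrow> ev m n (frag_of k) = Mm m n (app k)"
proof -
  have "(\<lambda>k. Mm m n (app k)) ` lam_keys m n \<subseteq> carrier (homs m n)"
    using Mm_in_Hom by (auto simp: lam_keys_def)
  then obtain h where "h \<in> hom (free_Abelian_group (lam_keys m n)) (homs m n)"
      "\<And>k. k \<in> lam_keys m n \<Longrightarrow> h (frag_of k) = Mm m n (app k)"
    using comm_group.free_Abelian_group_universal[OF comm_group_homs] by blast
  then have "\<exists>h. h \<in> hom (free_Abelian_group (lam_keys m n)) (homs m n)
                 \<and> (\<forall>k \<in> lam_keys m n. h (frag_of k) = Mm m n (app k))" by blast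
  from someI_ex[OF this] show "ev m n \<in> hom (free_Abelian_group (lam_keys m n)) (homs m n)"
      "k \<in> lam_keys m n \<Longrightarrow> ev m n (frag_of k) = Mm m n (app k)"
    unfolding ev_def by blast+
qed

lemma group_hom_ev: "group_hom (free_Abelian_group (lam_keys m n)) (homs m n) (ev m n)"
  using ev_hom group_homs by (simp add: group_hom_def group_hom_axioms_def)

lemma ev_closed: "Poly_Mapping.keys p \<subseteq> lam_keys m n \<Longrightarrow> ev m n p \<in> Hom C (Mo n) (Mo m)"
  using group_hom.hom_closed[OF group_hom_ev] by simp

lemma ev_zero: "ev m n 0 = zer C (Mo n) (Mo m)"
  using group_hom.hom_one[OF group_hom_ev] by simp

lemma ev_add:
  "Poly_Mapping.keys p \<subseteq> lam_keys m n \<Longrightarrow> Poly_Mapping.keys q \<subseteq> lam_keys m n \<Longrightarrow>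
    ev m n (p + q) = pls C (Mo n) (Mo m) (ev m n p) (ev m n q)"
  using group_hom.hom_mult[OF group_hom_ev] by simp

lemma ev_uminus: "Poly_Mapping.keys p \<subseteq> lam_keys m n \<Longrightarrow> ev m n (- p) = ng C (Mo n) (Mo m) (ev m n p)"
  using group_hom.hom_inv[OF group_hom_ev] inv_homs[OF ev_closed] by simp

lemma ev_basis: "f \<in> lam_hom m n \<Longrightarrow> ev m n (basis f) = Mm m n f"
  using ev_frag_of[of "Endo f"] by (simp add: basis_def lam_keys_def)

lemma ev_mult:
  assumes p: "Poly_Mapping.keys p \<subseteq> lam_keys m l" and q: "Poly_Mapping.keys q \<subseteq> lam_keys l n"
  shows "ev m n (p * q) = comp_M m l n (ev m l p) (ev l n q)"
proof -
  have mult_right_hom: "(\<lambda>p. ev m n (p * q)) \<in> hom (free_Abelian_group (lam_keys m l)) (homs m n)"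
    using q by (intro homI) (simp_all add: ev_closed ev_add keys_mult_lam_keys distrib_right)
  have comp_left_hom: "(\<lambda>p. comp_M m l n (ev m l p) y) \<in> hom (free_Abelian_group (lam_keys m l)) (homs m n)"
    if "y \<in> Hom C (Mo n) (Mo l)" for y
    by (intro homI)
      (use that in \<open>simp_all add: ev_closed ev_add comp_in_Hom cmp_pls_left[OF preadditive obj obj obj]\<close>)
  have generator: "ev m n (frag_of a * q) = comp_M m l n (ev m l (frag_of a)) (ev l n q)"
    if a: "a \<in> lam_keys m l" for a
  proof (rule free_Abelian_group_hom_eqI[OF group_homs _ _ _ q])
    show "(\<lambda>q. ev m n (frag_of a * q)) \<in> hom (free_Abelian_group (lam_keys l n)) (homs m n)"
      using a by (intro homI) (simp_all add: ev_closed ev_add keys_mult_lam_keys distrib_left)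
    show "(\<lambda>q. comp_M m l n (ev m l (frag_of a)) (ev l n q)) \<in> hom (free_Abelian_group (lam_keys l n)) (homs m n)"
      using a by (intro homI)
        (simp_all add: ev_closed ev_add comp_in_Hom cmp_pls_right[OF preadditive obj obj obj])
    fix b assume b: "b \<in> lam_keys l n"
    have "app (a + b) = app b \<circ> app a" by (simp add: plus_endo_def)
    moreover have "a + b \<in> lam_keys m n"
      using a b lam_hom_comp by (auto simp: lam_keys_def plus_endo_def)
    ultimately show "ev m n (frag_of a * frag_of b) = comp_M m l n (ev m l (frag_of a)) (ev l n (frag_of b))"
      using a b Mm_comp by (simp add: mult_single ev_frag_of lam_keys_def)
  qed
  show ?thesis
    by (rule free_Abelian_group_hom_eqI[OF group_homs mult_right_hom comp_left_hom generator p])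
      (simp_all add: ev_closed q)
qed

lemma face_ev: "1 \<le> n \<Longrightarrow> face Mm n i = ev (n - 1) n (face_elt n i)"
  by (simp add: face_def face_elt_def ev_basis eps_lam_hom)

lemma face_Suc_ev: "face Mm (n + 1) i = ev n (n + 1) (face_elt (n + 1) i)"
  using face_ev[of "n + 1" i] by simp

lemma degen_ev: "degen Mm n i = ev (n + 1) n (degen_elt n i)"
  by (simp add: degen_def degen_elt_def ev_basis eta_lam_hom)

lemma idm_ev: "idm C (Mo n) = ev n n 1"
  using duplicial by (simp add: duplicial_def ev_basis id_lam_hom flip: basis_id)

lemma sgnm_ev:
  "Poly_Mapping.keys p \<subseteq> lam_keys m n \<Longrightarrow> sgnm C (Mo n) (Mo m) k (ev m n p) = ev m n ((-1) ^ k * p)"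
  by (cases "even k") (simp_all add: sgnm_def ev_uminus)

lemma diff_ev:
  "Poly_Mapping.keys p \<subseteq> lam_keys m n \<Longrightarrow> Poly_Mapping.keys q \<subseteq> lam_keys m n \<Longrightarrow>
    pls C (Mo n) (Mo m) (ev m n p) (ng C (Mo n) (Mo m) (ev m n q)) = ev m n (p - q)"
  using ev_add[where q = "- q"] ev_uminus[of q] by simp

lemma altsum_ev:
  assumes "\<And>i. Poly_Mapping.keys (F i) \<subseteq> lam_keys m n"
  shows "altsum C (Mo n) (Mo m) N (\<lambda>i. ev m n (F i)) = ev m n (\<Sum>i\<le>N. (-1) ^ i * F i)"
proof -
  have keys: "Poly_Mapping.keys (\<Sum>i\<leftarrow>xs. (-1) ^ i * F i) \<subseteq> lam_keys m n" for xs
    by (induction xs) (simp_all add: keys_add_subset keys_neg_one_power_mult assms)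
  have "foldr (\<lambda>i acc. pls C (Mo n) (Mo m) (sgnm C (Mo n) (Mo m) i (ev m n (F i))) acc) xs
      (zer C (Mo n) (Mo m)) = ev m n (\<Sum>i\<leftarrow>xs. (-1) ^ i * F i)" for xs
    by (induction xs) (simp_all add: ev_zero sgnm_ev ev_add assms keys keys_neg_one_power_mult)
  moreover have "(\<Sum>i\<leftarrow>[0..<Suc N]. (-1) ^ i * F i) = (\<Sum>i\<le>N. (-1) ^ i * F i)"
    by (simp only: sum_set_upt_conv_sum_list_nat[symmetric] set_upt atLeast0LessThan lessThan_Suc_atMost)
  ultimately show ?thesis unfolding altsum_def by simp
qed

lemma bop_ev:
  assumes "1 \<le> n"
  shows "bop C Mo Mm n = ev (n - 1) n (face_alt n)"
proof -
  have "face Mm n = (\<lambda>i. ev (n - 1) n (face_elt n i))" using face_ev[OF assms] by auto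
  then show ?thesis
    unfolding bop_def face_alt_def using altsum_ev[of "face_elt n" "n - 1" n n] assms
    by (simp add: keys_face_elt)
qed

lemma dop_ev: "dop C Mo Mm n = ev (n + 1) n (degen_alt n)"
proof -
  have "degen Mm n = (\<lambda>i. ev (n + 1) n (degen_elt n i))" using degen_ev by auto
  then show ?thesis
    unfolding dop_def degen_alt_def using altsum_ev[of "degen_elt n" "n + 1" n "n + 1"]
    by (simp add: keys_degen_elt del: sum.atMost_Suc)
qed

lemma keys_cyc_elt: "Poly_Mapping.keys cyc_elt \<subseteq> lam_keys m m"
  unfolding cyc_elt_def by (simp add: keys_basis_lam_keys shift_lam_hom)

lemma keys_degen_face: "1 \<le> m \<Longrightarrow> Poly_Mapping.keys (degen_elt (m - 1) m * face_elt m 0) \<subseteq> lam_keys m m"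
  by (intro keys_mult_lam_keys[where l = "m - 1"] keys_degen_elt keys_face_elt) simp_all

lemma keys_karoubi_elt: "1 \<le> m \<Longrightarrow> Poly_Mapping.keys (karoubi_elt m) \<subseteq> lam_keys m m"
  unfolding karoubi_elt_def by (intro keys_diff_subset keys_cyc_elt keys_degen_face)

lemma karoubi_ev:
  assumes "1 \<le> m"
  shows "karoubi C Mo Mm m = ev m m ((-1) ^ m * karoubi_elt m)"
proof -
  have "cmp C (Mo m) (Mo (m + 1)) (Mo m) (face Mm (m + 1) 0) (degen Mm m (m + 1))
      = ev m m (face_elt (m + 1) 0 * degen_elt m (m + 1))"
    unfolding face_Suc_ev degen_ev
    by (rule ev_mult[symmetric]) (simp_all add: keys_face_elt keys_degen_elt)
  then have cyc: "cmp C (Mo m) (Mo (m + 1)) (Mo m) (face Mm (m + 1) 0) (degen Mm m (m + 1)) = ev m m cyc_elt"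
    by (simp only: face_zero_degen_last)
  have degen_face: "cmp C (Mo m) (Mo (m - 1)) (Mo m) (degen Mm (m - 1) m) (face Mm m 0)
      = ev m m (degen_elt (m - 1) m * face_elt m 0)"
    unfolding face_ev[OF assms] degen_ev using assms
    by (simp, intro ev_mult[symmetric]) (use assms in \<open>simp_all add: keys_face_elt keys_degen_elt\<close>)
  have "karoubi C Mo Mm m = sgnm C (Mo m) (Mo m) m
      (pls C (Mo m) (Mo m) (ev m m cyc_elt) (ng C (Mo m) (Mo m) (ev m m (degen_elt (m - 1) m * face_elt m 0))))"
    using assms by (simp only: karoubi_def cyc degen_face) simp
  also have "\<dots> = sgnm C (Mo m) (Mo m) m (ev m m (karoubi_elt m))"
    unfolding karoubi_elt_def using assms by (simp only: diff_ev keys_cyc_elt keys_degen_face)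
  finally show ?thesis using sgnm_ev[OF keys_karoubi_elt[OF assms]] by simp
qed

lemma karoubi_pow_ev: "1 \<le> m \<Longrightarrow> karoubi_pow C Mo Mm m k = ev m m (((-1) ^ m * karoubi_elt m) ^ k)"
  by (induction k) (simp_all add: idm_ev karoubi_ev ev_mult keys_karoubi_elt keys_power_lam_keys keys_neg_one_power_mult
      flip: ev_mult)

lemma keys_dk_elt: "Poly_Mapping.keys (dk_elt n) \<subseteq> lam_keys n n"
  unfolding dk_elt_def keys_neg_one_power_mult
  by (intro keys_mult_lam_keys[where l = "n + 1"] keys_face_elt keys_degen_elt keys_power_lam_keys keys_karoubi_elt)
    simp_all

lemma neg_one_power_mult_power: "((-1) ^ a * x) ^ k = (-1) ^ (a * k) * (x :: 'a :: ring_1) ^ k"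
proof (cases "even a")
  case False
  have "((-1) ^ a * x) ^ k = (- x) ^ k" using False by simp
  also have "\<dots> = (-1) ^ k * x ^ k" by (rule power_minus)
  also have "(-1) ^ k = (-1 :: 'a) ^ (a * k)" by (simp only: power_mult neg_one_odd_power[OF False])
  finally show ?thesis .
qed simp

lemma dk_ev: "dk C Mo Mm n = ev n n (dk_elt n)"
proof -
  have keys_power: "Poly_Mapping.keys (karoubi_elt (n + 1) ^ n) \<subseteq> lam_keys (n + 1) (n + 1)"
    by (intro keys_power_lam_keys keys_karoubi_elt) simp
  have keys_degen: "Poly_Mapping.keys (degen_elt n (n + 1)) \<subseteq> lam_keys (n + 1) n"
    by (rule keys_degen_elt) (rule refl)
  have "(-1 :: lam_ring) ^ ((n + 1) * n) = 1" by (rule neg_one_even_power) simp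
  then have "((-1) ^ (n + 1) * karoubi_elt (n + 1)) ^ n = karoubi_elt (n + 1) ^ n"
    by (simp only: neg_one_power_mult_power mult_1)
  then have "karoubi_pow C Mo Mm (n + 1) n = ev (n + 1) (n + 1) (karoubi_elt (n + 1) ^ n)"
    by (simp add: karoubi_pow_ev)
  then have "cmp C (Mo n) (Mo (n + 1)) (Mo (n + 1)) (karoubi_pow C Mo Mm (n + 1) n) (degen Mm n (n + 1))
      = ev (n + 1) n (karoubi_elt (n + 1) ^ n * degen_elt n (n + 1))"
    unfolding degen_ev by (simp only: ev_mult[OF keys_power keys_degen])
  then have "cmp C (Mo n) (Mo (n + 1)) (Mo n) (face Mm (n + 1) 0)
      (cmp C (Mo n) (Mo (n + 1)) (Mo (n + 1)) (karoubi_pow C Mo Mm (n + 1) n) (degen Mm n (n + 1)))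
      = ev n n (face_elt (n + 1) 0 * (karoubi_elt (n + 1) ^ n * degen_elt n (n + 1)))"
    unfolding face_Suc_ev
    by (simp only: ev_mult[OF keys_face_elt[OF refl] keys_mult_lam_keys[OF keys_power keys_degen]])
  moreover have "Poly_Mapping.keys (face_elt (n + 1) 0 * karoubi_elt (n + 1) ^ n * degen_elt n (n + 1))
      \<subseteq> lam_keys n n"
    by (intro keys_mult_lam_keys[OF keys_mult_lam_keys[OF keys_face_elt[OF refl] keys_power] keys_degen])
  ultimately show ?thesis
    unfolding dk_def dk_elt_def by (simp add: sgnm_ev mult.assoc)
qed

lemma bop_dk_commute:
  assumes "1 \<le> n"
  shows "comp_M (n - 1) n n (bop C Mo Mm n) (dk C Mo Mm n)
    = comp_M (n - 1) (n - 1) n (dk C Mo Mm (n - 1)) (bop C Mo Mm n)"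
proof -
  have "comp_M (n - 1) n n (bop C Mo Mm n) (dk C Mo Mm n) = ev (n - 1) n (face_alt n * dk_elt n)"
    unfolding bop_ev[OF assms] dk_ev by (rule ev_mult[OF keys_face_alt[OF assms] keys_dk_elt, symmetric])
  also have "\<dots> = ev (n - 1) n (dk_elt (n - 1) * face_alt n)"
    by (simp only: face_alt_dk_elt[OF assms])
  also have "\<dots> = comp_M (n - 1) (n - 1) n (dk C Mo Mm (n - 1)) (bop C Mo Mm n)"
    unfolding bop_ev[OF assms] dk_ev by (rule ev_mult[OF keys_dk_elt keys_face_alt[OF assms]])
  finally show ?thesis .
qed

lemma dop_dk_commute:
  "comp_M (n + 1) n n (dop C Mo Mm n) (dk C Mo Mm n)
    = comp_M (n + 1) (n + 1) n (dk C Mo Mm (n + 1)) (dop C Mo Mm n)"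
proof -
  have "comp_M (n + 1) n n (dop C Mo Mm n) (dk C Mo Mm n) = ev (n + 1) n (degen_alt n * dk_elt n)"
    unfolding dop_ev dk_ev by (rule ev_mult[OF keys_degen_alt keys_dk_elt, symmetric])
  also have "\<dots> = ev (n + 1) n (dk_elt (n + 1) * degen_alt n)"
    by (simp only: degen_alt_dk_elt)
  also have "\<dots> = comp_M (n + 1) (n + 1) n (dk C Mo Mm (n + 1)) (dop C Mo Mm n)"
    unfolding dop_ev dk_ev by (rule ev_mult[OF keys_dk_elt keys_degen_alt])
  finally show ?thesis .
qed

end

theorem mainTheorem16:
  fixes C :: "('o, 'm) preadd_cat"
    and Mo :: "nat \<Rightarrow> 'o"
    and Mm :: "nat \<Rightarrow> nat \<Rightarrow> (int \<Rightarrow> int) \<Rightarrow> 'm"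
  assumes "preadditive C"
    and "duplicial C Mo Mm"
  shows "(\<forall>n\<ge>1. cmp C (Mo n) (Mo n) (Mo (n - 1)) (bop C Mo Mm n) (dk C Mo Mm n)
                 = cmp C (Mo n) (Mo (n - 1)) (Mo (n - 1)) (dk C Mo Mm (n - 1)) (bop C Mo Mm n))
       \<and> (\<forall>n. cmp C (Mo n) (Mo n) (Mo (n + 1)) (dop C Mo Mm n) (dk C Mo Mm n)
                 = cmp C (Mo n) (Mo (n + 1)) (Mo (n + 1)) (dk C Mo Mm (n + 1)) (dop C Mo Mm n))"
proof -
  interpret duplicial_module C Mo Mm using assms by unfold_locales
  show ?thesis using bop_dk_commute dop_dk_commute by blast
qed

end
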